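(* Let $G$ be a finite, simple, connected graph and let $v \in V(G)$ be a vertex that is not a cut vertex of $G$. Then $$\chi_{dd}(G)-1 \leq \chi_{dd}(G-v) \leq \chi_{dd}(G)+\deg(v)-1,$$ where $G-v$ is the graph obtained from $G$ by deleting $v$ and all edges incident with $v$, and $\deg(v)$ is the degree of $v$ in $G$.
   Context: All graphs are finite, undirected and simple. For a vertex $w$, $N(w)$ is its open neighborhood and $N[w]=N(w)\cup\{w\}$ its closed neighborhood. A vertex $w$ dominates a set $S$ of vertices if $S \subseteq N[w]$. A domination coloring of a graph $H$ is a proper vertex coloring of $H$ (adjacent vertices receive different colors; a color class is the set of all vertices receiving a given color) such that every vertex of $H$ dominates at least one color class (possibly its own class), and every color class is dominated by at least one vertex of $H$. The domination chromatic number $\chi_{dd}(H)$ is the minimum number of color classes in a domination coloring of $H$. *)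

theory Defs
  imports Main
begin

definition simple_graph :: "'a set \<Rightarrow> ('a \<Rightarrow> 'a \<Rightarrow> bool) \<Rightarrow> bool" where
  "simple_graph V E \<longleftrightarrow> finite V \<and> (\<forall>x y. E x y \<longrightarrow> x \<in> V \<and> y \<in> V)
     \<and> (\<forall>x y. E x y \<longrightarrow> E y x) \<and> (\<forall>x. \<not> E x x)"

definition reach :: "'a set \<Rightarrow> ('a \<Rightarrow> 'a \<Rightarrow> bool) \<Rightarrow> 'a \<Rightarrow> 'a \<Rightarrow> bool" where
  "reach V E = (\<lambda>x y. x \<in> V \<and> y \<in> V \<and> E x y)\<^sup>*\<^sup>*"

definition connected_graph :: "'a set \<Rightarrow> ('a \<Rightarrow> 'a \<Rightarrow> bool) \<Rightarrow> bool" where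
  "connected_graph V E \<longleftrightarrow> V \<noteq> {} \<and> (\<forall>u\<in>V. \<forall>w\<in>V. reach V E u w)"

definition components :: "'a set \<Rightarrow> ('a \<Rightarrow> 'a \<Rightarrow> bool) \<Rightarrow> 'a set set" where
  "components V E = V // {(x, y). x \<in> V \<and> y \<in> V \<and> reach V E x y}"

definition del_vertex_V :: "'a set \<Rightarrow> 'a \<Rightarrow> 'a set" where
  "del_vertex_V V v = V - {v}"

definition del_vertex_E :: "('a \<Rightarrow> 'a \<Rightarrow> bool) \<Rightarrow> 'a \<Rightarrow> 'a \<Rightarrow> 'a \<Rightarrow> bool" where
  "del_vertex_E E v = (\<lambda>x y. E x y \<and> x \<noteq> v \<and> y \<noteq> v)"

definition cut_vertex :: "'a set \<Rightarrow> ('a \<Rightarrow> 'a \<Rightarrow> bool) \<Rightarrow> 'a \<Rightarrow> bool" where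
  "cut_vertex V E v \<longleftrightarrow> v \<in> V \<and>
     card (components (del_vertex_V V v) (del_vertex_E E v)) > card (components V E)"

definition nbhd :: "'a set \<Rightarrow> ('a \<Rightarrow> 'a \<Rightarrow> bool) \<Rightarrow> 'a \<Rightarrow> 'a set" where
  "nbhd V E w = {u \<in> V. E w u}"

definition cnbhd :: "'a set \<Rightarrow> ('a \<Rightarrow> 'a \<Rightarrow> bool) \<Rightarrow> 'a \<Rightarrow> 'a set" where
  "cnbhd V E w = insert w (nbhd V E w)"

definition degree :: "'a set \<Rightarrow> ('a \<Rightarrow> 'a \<Rightarrow> bool) \<Rightarrow> 'a \<Rightarrow> nat" where
  "degree V E w = card (nbhd V E w)"

definition color_classes :: "'a set \<Rightarrow> ('a \<Rightarrow> nat) \<Rightarrow> 'a set set" where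
  "color_classes V c = (\<lambda>i. {x \<in> V. c x = i}) ` (c ` V)"

definition dominates :: "'a set \<Rightarrow> ('a \<Rightarrow> 'a \<Rightarrow> bool) \<Rightarrow> 'a \<Rightarrow> 'a set \<Rightarrow> bool" where
  "dominates V E w S \<longleftrightarrow> S \<subseteq> cnbhd V E w"

definition domination_coloring :: "'a set \<Rightarrow> ('a \<Rightarrow> 'a \<Rightarrow> bool) \<Rightarrow> ('a \<Rightarrow> nat) \<Rightarrow> bool" where
  "domination_coloring V E c \<longleftrightarrow>
     (\<forall>x\<in>V. \<forall>y\<in>V. E x y \<longrightarrow> c x \<noteq> c y)
   \<and> (\<forall>w\<in>V. \<exists>C\<in>color_classes V c. dominates V E w C)
   \<and> (\<forall>C\<in>color_classes V c. \<exists>w\<in>V. dominates V E w C)"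

definition chi_dd :: "'a set \<Rightarrow> ('a \<Rightarrow> 'a \<Rightarrow> bool) \<Rightarrow> nat" where
  "chi_dd V E = (LEAST k. \<exists>c. domination_coloring V E c \<and> card (color_classes V c) = k)"

end

theory Submission
  imports Defs
begin

text \<open>Both bounds hold for every vertex v of a finite simple graph G.
  For the lower bound, extend an optimal domination coloring of G - v by giving v a fresh
  color: the new class {v} is dominated by v, v dominates it, and nothing else changes.
  For the upper bound, start from an optimal domination coloring of G and give each neighbour
  of v its own fresh color. The class dominated by v lies inside N[v], so it disappears, and at
  most deg(v) new classes appear. A vertex w that dominated a class C still dominates
  C - N[v] if this is nonempty, and otherwise C \<subseteq> N(v) meets N[w], which yields a
  dominated singleton class.\<close>

definition color_class :: "'a set \<Rightarrow> ('a \<Rightarrow> nat) \<Rightarrow> nat \<Rightarrow> 'a set" where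
  "color_class V c i = {x \<in> V. c x = i}"

lemma card_color_classes: "finite V \<Longrightarrow> card (color_classes V c) = card (c ` V)"
  unfolding color_classes_def by (rule card_image) (auto simp: inj_on_def)

lemma domination_coloring_iff:
  "domination_coloring V E c \<longleftrightarrow>
     (\<forall>x\<in>V. \<forall>y\<in>V. E x y \<longrightarrow> c x \<noteq> c y)
   \<and> (\<forall>w\<in>V. \<exists>i\<in>c ` V. color_class V c i \<subseteq> cnbhd V E w)
   \<and> (\<forall>i\<in>c ` V. \<exists>w\<in>V. color_class V c i \<subseteq> cnbhd V E w)"
  unfolding domination_coloring_def color_classes_def dominates_def color_class_def by blast

lemma inj_on_imp_domination_coloring:
  assumes inj: "inj_on c V" and irrefl: "\<And>x. \<not> E x x"
  shows "domination_coloring V E c"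
proof -
  have singleton: "color_class V c (c w) \<subseteq> cnbhd V E w" if "w \<in> V" for w
    using inj that unfolding color_class_def cnbhd_def inj_on_def by auto
  show ?thesis
    unfolding domination_coloring_iff
  proof (intro conjI ballI impI)
    fix x y assume "x \<in> V" "y \<in> V" "E x y"
    moreover from \<open>E x y\<close> irrefl have "x \<noteq> y" by auto
    ultimately show "c x \<noteq> c y"
      using inj_on_eq_iff[OF inj] by auto
  qed (use singleton in blast)+
qed

lemma chi_dd_le_card:
  assumes "finite V" "domination_coloring V E c"
  shows "chi_dd V E \<le> card (c ` V)"
  unfolding chi_dd_def using assms card_color_classes[OF assms(1)]
  by (intro Least_le) metis

lemma chi_dd_attained:
  assumes "simple_graph V E"
  obtains c where "domination_coloring V E c" "card (c ` V) = chi_dd V E"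
proof -
  have fin: "finite V" and irrefl: "\<And>x. \<not> E x x"
    using assms unfolding simple_graph_def by auto
  obtain f :: "'a \<Rightarrow> nat" where "inj_on f V"
    using finite_imp_inj_to_nat_seg[OF fin] by blast
  then have f: "domination_coloring V E f"
    using irrefl inj_on_imp_domination_coloring by blast
  have "\<exists>c. domination_coloring V E c \<and> card (color_classes V c) = chi_dd V E"
    unfolding chi_dd_def by (rule LeastI_ex) (use f in blast)
  then show ?thesis
    using that card_color_classes[OF fin] by metis
qed

lemma simple_graph_del_vertex:
  "simple_graph V E \<Longrightarrow> simple_graph (del_vertex_V V v) (del_vertex_E E v)"
  unfolding simple_graph_def del_vertex_V_def del_vertex_E_def by auto

lemma cnbhd_del_vertex:
  "w \<noteq> v \<Longrightarrow> cnbhd (del_vertex_V V v) (del_vertex_E E v) w = cnbhd V E w - {v}"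
  unfolding cnbhd_def nbhd_def del_vertex_V_def del_vertex_E_def by auto

lemma color_class_fun_upd_fresh:
  assumes "v \<in> V" "M \<notin> c ` (V - {v})"
  shows "color_class V (c(v := M)) i = (if i = M then {v} else color_class (V - {v}) c i)"
  using assms unfolding color_class_def by auto

lemma domination_coloring_fresh_color:
  assumes irrefl: "\<And>x. \<not> E x x" and v: "v \<in> V"
    and c: "domination_coloring (del_vertex_V V v) (del_vertex_E E v) c"
    and fresh: "M \<notin> c ` del_vertex_V V v"
  shows "domination_coloring V E (c(v := M))"
proof -
  let ?V' = "del_vertex_V V v" and ?E' = "del_vertex_E E v" and ?d = "c(v := M)"
  have V': "?V' = V - {v}"
    by (simp add: del_vertex_V_def)
  have class_eq: "color_class V ?d i = (if i = M then {v} else color_class ?V' c i)" for i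
    using color_class_fun_upd_fresh[OF v] fresh unfolding V' by blast
  have image: "?d ` V = insert M (c ` ?V')"
    using v unfolding V' fun_upd_image by simp
  from c have proper: "\<forall>x\<in>?V'. \<forall>y\<in>?V'. ?E' x y \<longrightarrow> c x \<noteq> c y"
    and dominating: "\<forall>w\<in>?V'. \<exists>i\<in>c ` ?V'. color_class ?V' c i \<subseteq> cnbhd ?V' ?E' w"
    and dominated: "\<forall>i\<in>c ` ?V'. \<exists>w\<in>?V'. color_class ?V' c i \<subseteq> cnbhd ?V' ?E' w"
    unfolding domination_coloring_iff by auto
  show ?thesis
    unfolding domination_coloring_iff
  proof (intro conjI ballI impI)
    fix x y assume "x \<in> V" "y \<in> V" "E x y"
    then show "?d x \<noteq> ?d y"
      using proper fresh irrefl unfolding V' del_vertex_E_def by (cases "x = v \<or> y = v") auto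
  next
    fix w assume "w \<in> V"
    show "\<exists>i\<in>?d ` V. color_class V ?d i \<subseteq> cnbhd V E w"
    proof (cases "w = v")
      case True
      then show ?thesis
        using class_eq[of M] image unfolding cnbhd_def by auto
    next
      case False
      with \<open>w \<in> V\<close> obtain i where i: "i \<in> c ` ?V'" "color_class ?V' c i \<subseteq> cnbhd ?V' ?E' w"
        using dominating unfolding V' by blast
      with fresh have "color_class V ?d i \<subseteq> cnbhd V E w"
        using class_eq[of i] cnbhd_del_vertex[OF False, of V E] by auto
      with i(1) show ?thesis
        unfolding image by blast
    qed
  next
    fix i assume i: "i \<in> ?d ` V"
    show "\<exists>w\<in>V. color_class V ?d i \<subseteq> cnbhd V E w"
    proof (cases "i = M")
      case True
      then show ?thesis
        using class_eq[of M] v unfolding cnbhd_def by auto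
    next
      case False
      with i obtain w where w: "w \<in> ?V'" "color_class ?V' c i \<subseteq> cnbhd ?V' ?E' w"
        using dominated unfolding image by auto
      then have "w \<in> V" "w \<noteq> v"
        unfolding V' by auto
      with w(2) False have "color_class V ?d i \<subseteq> cnbhd V E w"
        using class_eq[of i] cnbhd_del_vertex[of w v V E] by auto
      with \<open>w \<in> V\<close> show ?thesis
        by blast
    qed
  qed
qed

lemma chi_dd_le_chi_dd_del_vertex:
  assumes graph: "simple_graph V E" and v: "v \<in> V"
  shows "chi_dd V E \<le> chi_dd (del_vertex_V V v) (del_vertex_E E v) + 1"
proof -
  let ?V' = "del_vertex_V V v" and ?E' = "del_vertex_E E v"
  have fin: "finite V" and irrefl: "\<And>x. \<not> E x x"
    using graph unfolding simple_graph_def by auto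
  obtain c where c: "domination_coloring ?V' ?E' c" "card (c ` ?V') = chi_dd ?V' ?E'"
    using chi_dd_attained[OF simple_graph_del_vertex[OF graph]] .
  have fin': "finite (c ` ?V')"
    using fin by (simp add: del_vertex_V_def)
  then obtain M where "\<forall>i\<in>c ` ?V'. i < M"
    by (auto simp: finite_nat_set_iff_bounded)
  then have fresh: "M \<notin> c ` ?V'"
    by blast
  have "chi_dd V E \<le> card (c(v := M) ` V)"
    using fin domination_coloring_fresh_color[OF irrefl v c(1) fresh] by (rule chi_dd_le_card)
  also have "c(v := M) ` V = insert M (c ` ?V')"
    using v by (auto simp: del_vertex_V_def)
  also have "card \<dots> = chi_dd ?V' ?E' + 1"
    using fin' fresh c(2) by simp
  finally show ?thesis .
qed

locale nbhd_recoloring =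
  fixes V :: "'a set" and E :: "'a \<Rightarrow> 'a \<Rightarrow> bool" and v :: 'a
    and c f :: "'a \<Rightarrow> nat" and K :: nat
  assumes graph: "simple_graph V E" and v_in: "v \<in> V"
    and coloring: "domination_coloring V E c"
    and inj_f: "inj_on f V" and c_less: "\<And>x. x \<in> V \<Longrightarrow> c x < K"
begin

abbreviation "V' \<equiv> del_vertex_V V v"
abbreviation "E' \<equiv> del_vertex_E E v"

definition recolored :: "'a \<Rightarrow> nat" where
  "recolored u = (if u \<in> nbhd V E v then K + f u else c u)"

lemma irrefl: "\<not> E x x"
  using graph unfolding simple_graph_def by auto

lemma V'_eq: "V' = V - {v}"
  by (simp add: del_vertex_V_def)

lemma nbhd_subset_V': "nbhd V E v \<subseteq> V'"
  using irrefl unfolding nbhd_def V'_eq by auto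

lemma cnbhd_v_eq: "cnbhd V E v = insert v (nbhd V E v)"
  unfolding cnbhd_def ..

lemma recolored_eq_nbhd_iff:
  assumes "x \<in> V" "u \<in> nbhd V E v"
  shows "recolored x = recolored u \<longleftrightarrow> x = u"
proof (cases "x \<in> nbhd V E v")
  case True
  then show ?thesis
    using assms inj_f unfolding recolored_def nbhd_def inj_on_def by auto
next
  case False
  then have "recolored x < K"
    using assms c_less unfolding recolored_def by auto
  with False assms show ?thesis
    unfolding recolored_def by auto
qed

lemma color_class_recolored_nbhd:
  "u \<in> nbhd V E v \<Longrightarrow> color_class V' recolored (recolored u) = {u}"
  using recolored_eq_nbhd_iff nbhd_subset_V' unfolding color_class_def V'_eq by auto

lemma color_class_recolored_other:
  assumes "u \<in> V'" "u \<notin> nbhd V E v"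
  shows "color_class V' recolored (recolored u) = color_class V c (c u) - cnbhd V E v"
proof -
  have u: "u \<in> V" "u \<noteq> v" "recolored u = c u"
    using assms unfolding V'_eq recolored_def by auto
  have not_nbhd: "x \<notin> nbhd V E v" if "x \<in> V" "recolored x = recolored u" for x
    using recolored_eq_nbhd_iff[OF u(1)] assms(2) that by metis
  show ?thesis
  proof (intro equalityI subsetI)
    fix x assume "x \<in> color_class V' recolored (recolored u)"
    then have "x \<in> V" "x \<noteq> v" "recolored x = recolored u"
      unfolding color_class_def V'_eq by auto
    moreover from this have "x \<notin> nbhd V E v"
      by (intro not_nbhd)
    ultimately show "x \<in> color_class V c (c u) - cnbhd V E v"
      using u unfolding color_class_def cnbhd_v_eq recolored_def by auto
  next
    fix x assume "x \<in> color_class V c (c u) - cnbhd V E v"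
    then show "x \<in> color_class V' recolored (recolored u)"
      using u unfolding color_class_def cnbhd_v_eq recolored_def V'_eq by auto
  qed
qed

lemma recolored_proper:
  assumes "x \<in> V'" "y \<in> V'" "E' x y"
  shows "recolored x \<noteq> recolored y"
  using assms recolored_eq_nbhd_iff[of x y] recolored_eq_nbhd_iff[of y x] irrefl coloring
  unfolding domination_coloring_iff recolored_def V'_eq del_vertex_E_def
  by (auto split: if_splits)

lemma recolored_dominates_some_class:
  assumes w: "w \<in> V'"
  shows "\<exists>i\<in>recolored ` V'. color_class V' recolored i \<subseteq> cnbhd V' E' w"
proof (cases "w \<in> nbhd V E v")
  case True
  then show ?thesis
    using w color_class_recolored_nbhd unfolding cnbhd_def by blast
next
  case False
  have "w \<in> V" and cnbhd_w: "cnbhd V' E' w = cnbhd V E w - {v}"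
    using w cnbhd_del_vertex[of w v V E] unfolding V'_eq by auto
  have v_notin: "v \<notin> cnbhd V E w"
    using w False graph unfolding simple_graph_def cnbhd_def nbhd_def V'_eq by auto
  obtain i where i: "i \<in> c ` V" "color_class V c i \<subseteq> cnbhd V E w"
    using coloring \<open>w \<in> V\<close> unfolding domination_coloring_iff by blast
  show ?thesis
  proof (cases "color_class V c i \<subseteq> cnbhd V E v")
    case False
    then obtain x where "x \<in> color_class V c i" "x \<notin> cnbhd V E v"
      by blast
    then have x: "x \<in> V'" "x \<notin> nbhd V E v" "c x = i"
      unfolding color_class_def cnbhd_v_eq V'_eq by auto
    have "color_class V' recolored (recolored x) \<subseteq> cnbhd V' E' w"
      using color_class_recolored_other[OF x(1,2)] i(2) x(3) cnbhd_w cnbhd_v_eq by auto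
    with x(1) show ?thesis
      by blast
  next
    case True
    \<comment> \<open>the class lies in N(v), since v is not in N[w]\<close>
    obtain y where "y \<in> color_class V c i"
      using i(1) unfolding color_class_def by auto
    with True i(2) have y: "y \<in> nbhd V E v" "y \<in> cnbhd V' E' w"
      using v_notin cnbhd_w cnbhd_v_eq by auto
    then have "color_class V' recolored (recolored y) \<subseteq> cnbhd V' E' w"
      using color_class_recolored_nbhd by auto
    with y(1) show ?thesis
      using nbhd_subset_V' by blast
  qed
qed

lemma recolored_class_dominated:
  assumes "i \<in> recolored ` V'"
  shows "\<exists>w\<in>V'. color_class V' recolored i \<subseteq> cnbhd V' E' w"
proof -
  from assms obtain u where u: "u \<in> V'" "i = recolored u"
    by auto
  show ?thesis
  proof (cases "u \<in> nbhd V E v")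
    case True
    then show ?thesis
      using u color_class_recolored_nbhd unfolding cnbhd_def by auto
  next
    case False
    have "u \<in> color_class V c (c u)"
      using u unfolding color_class_def V'_eq by auto
    moreover obtain w where w: "w \<in> V" "color_class V c (c u) \<subseteq> cnbhd V E w"
      using coloring u unfolding domination_coloring_iff V'_eq by blast
    ultimately have "w \<noteq> v"
      using u False by (auto simp: cnbhd_v_eq V'_eq)
    have "color_class V' recolored i = color_class V c (c u) - cnbhd V E v"
      using u(2) color_class_recolored_other[OF u(1) False] by simp
    also have "\<dots> \<subseteq> cnbhd V E w - {v}"
      using w(2) unfolding cnbhd_v_eq by auto
    also have "\<dots> = cnbhd V' E' w"
      using cnbhd_del_vertex[OF \<open>w \<noteq> v\<close>] by simp
    finally have "color_class V' recolored i \<subseteq> cnbhd V' E' w" .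
    moreover have "w \<in> V'"
      using w(1) \<open>w \<noteq> v\<close> unfolding V'_eq by auto
    ultimately show ?thesis
      by blast
  qed
qed

lemma recolored_domination_coloring: "domination_coloring V' E' recolored"
  unfolding domination_coloring_iff
  using recolored_proper recolored_dominates_some_class recolored_class_dominated by blast

lemma card_recolored_le: "card (recolored ` V') + 1 \<le> card (c ` V) + degree V E v"
proof -
  have fin: "finite V"
    using graph unfolding simple_graph_def by auto
  obtain i0 where i0: "i0 \<in> c ` V" "color_class V c i0 \<subseteq> cnbhd V E v"
    using coloring v_in unfolding domination_coloring_iff by blast
  \<comment> \<open>class i0 lies in N[v], so every vertex of it is v or gets a fresh color\<close>
  have "recolored ` V' \<subseteq> recolored ` nbhd V E v \<union> (c ` V - {i0})"
    using i0(2) unfolding recolored_def color_class_def cnbhd_v_eq V'_eq by auto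
  moreover have fin_N: "finite (nbhd V E v)"
    using fin nbhd_subset_V' finite_subset unfolding V'_eq by auto
  ultimately have "card (recolored ` V') \<le> card (recolored ` nbhd V E v \<union> (c ` V - {i0}))"
    using fin by (intro card_mono) auto
  also have "\<dots> \<le> card (recolored ` nbhd V E v) + card (c ` V - {i0})"
    by (rule card_Un_le)
  also have "\<dots> \<le> degree V E v + card (c ` V - {i0})"
    unfolding degree_def using card_image_le[OF fin_N] by simp
  finally show ?thesis
    using card_Suc_Diff1[OF finite_imageI[OF fin] i0(1)] by simp
qed

end

lemma chi_dd_del_vertex_le:
  assumes graph: "simple_graph V E" and v: "v \<in> V"
  shows "chi_dd (del_vertex_V V v) (del_vertex_E E v) + 1 \<le> chi_dd V E + degree V E v"
proof -
  have fin: "finite V"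
    using graph unfolding simple_graph_def by auto
  obtain c where c: "domination_coloring V E c" "card (c ` V) = chi_dd V E"
    using chi_dd_attained[OF graph] .
  obtain f :: "'a \<Rightarrow> nat" where f: "inj_on f V"
    using finite_imp_inj_to_nat_seg[OF fin] by blast
  obtain K where K: "\<forall>i\<in>c ` V. i < K"
    using finite_imageI[OF fin, of c] by (auto simp: finite_nat_set_iff_bounded)
  interpret nbhd_recoloring V E v c f K
    using graph v c(1) f K by unfold_locales auto
  have "chi_dd V' E' \<le> card (recolored ` V')"
    using fin recolored_domination_coloring by (intro chi_dd_le_card) (simp_all add: V'_eq)
  then show ?thesis
    using card_recolored_le c(2) by linarith
qed

theorem theorem1:
  fixes V :: "'a set" and E :: "'a \<Rightarrow> 'a \<Rightarrow> bool" and v :: 'a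
  assumes "simple_graph V E"
    and "connected_graph V E"
    and "v \<in> V"
    and "\<not> cut_vertex V E v"
  shows "int (chi_dd V E) - 1 \<le> int (chi_dd (del_vertex_V V v) (del_vertex_E E v))
       \<and> int (chi_dd (del_vertex_V V v) (del_vertex_E E v))
           \<le> int (chi_dd V E) + int (degree V E v) - 1"
  using chi_dd_le_chi_dd_del_vertex[OF assms(1,3)] chi_dd_del_vertex_le[OF assms(1,3)]
  by linarith

end
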